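(* Let $A$ be a real $2\times 2$ matrix and $B$ a real $1\times 2$ matrix, and let $\mathrm{NT}=\{\vec{x}\in\mathbb{R}^2 : BA^k\vec{x}>0 \text{ for all integers } k\ge 0\}$. Suppose $A$ has a positive eigenvalue and has an eigenvector $\vec{\alpha}$ with $B\vec{\alpha}=0$. If $\vec{\xi}\in\mathbb{R}^2$ satisfies $B\vec{\xi}>0$ and $BA\vec{\xi}>0$, then $\mathrm{NT}=\{\vec{x}\in\mathbb{R}^2: B\vec{x}>0\}$.
   Context: $\mathrm{NT}$ is the non-termination set of the loop "while $(B\vec{x}>0)$ $\{\vec{x}:=A\vec{x}\}$". *)

theory Defs
  imports "HOL-Analysis.Analysis"
begin

primrec matpow :: "real^'n^'n \<Rightarrow> nat \<Rightarrow> real^'n^'n" where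
  "matpow A 0 = mat 1"
| "matpow A (Suc k) = A ** matpow A k"

definition is_eigenvalue :: "real^'n^'n \<Rightarrow> real \<Rightarrow> bool" where
  "is_eigenvalue A l \<longleftrightarrow> (\<exists>v. v \<noteq> 0 \<and> A *v v = l *\<^sub>R v)"

definition is_eigenvector :: "real^'n^'n \<Rightarrow> real^'n \<Rightarrow> bool" where
  "is_eigenvector A v \<longleftrightarrow> v \<noteq> 0 \<and> (\<exists>l. A *v v = l *\<^sub>R v)"

text \<open>Non-termination set of  while (B x > 0) { x := A x }, B a 1x2 matrix.\<close>
definition NT :: "real^2^2 \<Rightarrow> real^2^1 \<Rightarrow> (real^2) set" where
  "NT A B = {x. \<forall>k::nat. ((B ** matpow A k) *v x) $ 1 > 0}"

end

theory Submission
  imports Defs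
begin

text \<open>
  Write f(y) = (B y)_1 for the linear functional defined by B. The heart of the
  proof is that on the plane f is an eigen-covector of A: f(A y) = c f(y) for all y,
  with c = f(A xi) / f(xi) > 0. Indeed, the functional g(y) = f(A y) - c f(y)
  vanishes on the eigenvector alpha (since f(A alpha) = mu f(alpha) = 0) and on xi
  (by the choice of c); as f(alpha) = 0 but f(xi) > 0, the vectors alpha and xi are
  linearly independent and hence span the plane, so g = 0. Iterating gives
  (B A^k x)_1 = c^k (B x)_1, which is positive for all k exactly when (B x)_1 > 0.
\<close>

lemma not_in_span_of_kernel_vector:
  fixes f :: "'a::real_vector \<Rightarrow> real"
  assumes "linear f" and "f u = 0" and "f v \<noteq> 0"
  shows "v \<notin> span {u}"
  using assms linear_eq_0_on_span[of f "{u}" v] by auto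

lemma span_pair_eq_UNIV:
  fixes u v :: "'a::euclidean_space"
  assumes "DIM('a) = 2" and "u \<noteq> 0" and "v \<notin> span {u}"
  shows "span {u, v} = UNIV"
proof -
  have "u \<noteq> v" using assms(3) span_base by blast
  have "independent (insert v {u})"
    using assms(2,3) by (intro independent_insertI) (simp_all add: independent_insert independent_empty)
  hence indep: "independent {u, v}" by (simp add: insert_commute)
  have "card {u, v} = dim (UNIV :: 'a set)" using assms(1) \<open>u \<noteq> v\<close> by simp
  thus ?thesis using card_eq_dim[of "{u, v}" UNIV] indep by auto
qed

lemma functional_scaled_by_map:
  fixes T :: "'a::euclidean_space \<Rightarrow> 'a" and f :: "'a \<Rightarrow> real"
  assumes dim: "DIM('a) = 2" and lin_T: "linear T" and lin_f: "linear f"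
    and eigen: "\<alpha> \<noteq> 0" "T \<alpha> = \<mu> *\<^sub>R \<alpha>"
    and kernel: "f \<alpha> = 0" and off_kernel: "f \<xi> \<noteq> 0"
  shows "f (T y) = (f (T \<xi>) / f \<xi>) * f y"
proof -
  define c where "c = f (T \<xi>) / f \<xi>"
  define g where "g y = f (T y) - c * f y" for y
  have lin_g: "linear g"
    unfolding g_def using lin_T lin_f linear_compose_scale_right[OF lin_f, of c]
    by (intro linear_compose_sub linear_compose[of T f, unfolded o_def]) simp_all
  have "g \<alpha> = 0"
    using eigen(2) kernel lin_f by (simp add: g_def linear_scale)
  moreover have "g \<xi> = 0"
    using off_kernel by (simp add: g_def c_def)
  moreover have "span {\<alpha>, \<xi>} = UNIV"
    using span_pair_eq_UNIV[OF dim eigen(1)]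
      not_in_span_of_kernel_vector[OF lin_f kernel off_kernel] by blast
  ultimately have "g y = 0"
    using linear_eq_0_on_span[OF lin_g, of "{\<alpha>, \<xi>}" y] by auto
  thus ?thesis by (simp add: g_def c_def)
qed

lemma functional_scaled_by_matpow:
  fixes A :: "real^'n^'n" and f :: "real^'n \<Rightarrow> real"
  assumes "\<And>y. f (A *v y) = c * f y"
  shows "f (matpow A k *v y) = c ^ k * f y"
proof (induction k)
  case (Suc k)
  have "f (matpow A (Suc k) *v y) = c * f (matpow A k *v y)"
    by (simp add: matrix_vector_mul_assoc[symmetric] assms)
  with Suc show ?case by simp
qed simp

text \<open>When B is scaled by a positive factor under A, the sign of B A^k x does not
  depend on k, so the loop runs forever exactly from the states where the guard
  holds initially.\<close>
lemma NT_of_scaled_guard: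
  fixes A :: "real^2^2" and B :: "real^2^1"
  assumes "c > 0" and "\<And>y. (B *v (A *v y)) $ 1 = c * (B *v y) $ 1"
  shows "NT A B = {x. (B *v x) $ 1 > 0}"
proof -
  have iterate: "((B ** matpow A k) *v x) $ 1 = c ^ k * (B *v x) $ 1" for k x
    using functional_scaled_by_matpow[of "\<lambda>y. (B *v y) $ 1" A c k x] assms(2)
    by (simp add: matrix_vector_mul_assoc[symmetric])
  show ?thesis
  proof (intro set_eqI iffI)
    fix x assume "x \<in> NT A B"
    hence "((B ** matpow A 0) *v x) $ 1 > 0" unfolding NT_def by blast
    thus "x \<in> {x. (B *v x) $ 1 > 0}" by simp
  next
    fix x assume "x \<in> {x. (B *v x) $ 1 > 0}"
    thus "x \<in> NT A B"
      unfolding NT_def using iterate assms(1) by simp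
  qed
qed

theorem lemma4:
  fixes A :: "real^2^2" and B :: "real^2^1" and \<alpha> \<xi> :: "real^2"
  assumes "\<exists>l>0. is_eigenvalue A l"
    and "is_eigenvector A \<alpha>" and "B *v \<alpha> = 0"
    and "(B *v \<xi>) $ 1 > 0" and "((B ** A) *v \<xi>) $ 1 > 0"
  shows "NT A B = {x. (B *v x) $ 1 > 0}"
proof -
  define f where "f y = (B *v y) $ 1" for y
  obtain \<mu> where eigen: "\<alpha> \<noteq> 0" "A *v \<alpha> = \<mu> *\<^sub>R \<alpha>"
    using assms(2) unfolding is_eigenvector_def by blast
  have lin_f: "linear f"
    unfolding f_def by (simp add: linear_iff matrix_vector_right_distrib matrix_vector_mult_scaleR)
  have f_\<alpha>: "f \<alpha> = 0" using assms(3) by (simp add: f_def)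
  have f_\<xi>: "f \<xi> > 0" and f_A\<xi>: "f (A *v \<xi>) > 0"
    using assms(4,5) by (simp_all add: f_def matrix_vector_mul_assoc[symmetric])
  have dim: "DIM(real^2) = 2" by simp
  define c where "c = f (A *v \<xi>) / f \<xi>"
  have scaled: "f (A *v y) = c * f y" for y
    using functional_scaled_by_map[OF dim matrix_vector_mul_linear lin_f eigen f_\<alpha>] f_\<xi>
    by (simp add: c_def)
  have "c > 0" using f_\<xi> f_A\<xi> by (simp add: c_def)
  from NT_of_scaled_guard[OF this scaled[unfolded f_def]] show ?thesis .
qed

end
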